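(* Let $a\ge2$ be real and $\widetilde{\mathcal Z}=\widetilde R_{a,1}\cup\widetilde R_{1,a}$. Then for all $\alpha\in[0,1]$, $$2(a-1)\big((1-\alpha)-2(1-\alpha)^2\big)\le\widetilde I(\alpha,\alpha,\widetilde{\mathcal Z})\le2(a-1)(1-\alpha).$$
   Context: $\widetilde R_{a,b}=[0,a]\times[0,b]$. A Euclidean zero-set is a closed $\widetilde{\mathcal Z}\subseteq[0,\infty)^2$ such that $(a,b)\in\widetilde{\mathcal Z}$ implies $\widetilde R_{a,b}\subseteq\widetilde{\mathcal Z}$, and $\widetilde{\mathcal Z}$ is the closure of $\widetilde{\mathcal Z}\cap(0,\infty)^2$. For Borel $A\subseteq[0,\infty)^2$, $\widetilde{\mathrm{row}}(x,A)$ (resp. $\widetilde{\mathrm{col}}(x,A)$) is the 1-dimensional Lebesgue measure of $A$ intersected with the horizontal (resp. vertical) line through $x$. For left-continuous nonincreasing $f,g:[0,\infty)\to[0,\infty)$ of compact support, $\widetilde{\mathcal T}(A)=A\cup\{(u,v):(\widetilde{\mathrm{row}}((u,v),A)+f(v),\widetilde{\mathrm{col}}((u,v),A)+g(u))\notin\widetilde{\mathcal Z}\}$; $A$ E-spans for $(\widetilde{\mathcal Z},f,g)$ if $\bigcup_n\widetilde{\mathcal T}^n(A)=[0,\infty)^2$. For bounded $\widetilde{\mathcal Z}$ and $(\alpha,\beta)\in[0,1]^2$: $\widetilde I(\alpha,\beta,\widetilde{\mathcal Z})=\inf\{\mathrm{area}(A)+(1-\alpha)\int_0^\infty f+(1-\beta)\int_0^\infty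 g\}$ over all $(A,f,g)$ with $A$ compact E-spanning for $(\widetilde{\mathcal Z},f,g)$. *)

theory Defs
  imports "HOL-Analysis.Analysis"
begin

definition ERect :: "real \<Rightarrow> real \<Rightarrow> (real \<times> real) set" where
  "ERect a b = {0..a} \<times> {0..b}"

definition quadrant :: "(real \<times> real) set" where
  "quadrant = {p. fst p \<ge> 0 \<and> snd p \<ge> 0}"

definition euclid_zero_set :: "(real \<times> real) set \<Rightarrow> bool" where
  "euclid_zero_set Z \<longleftrightarrow> closed Z \<and> Z \<subseteq> quadrant \<and>
     (\<forall>a b. (a, b) \<in> Z \<longrightarrow> ERect a b \<subseteq> Z) \<and>
     Z = closure (Z \<inter> {p. fst p > 0 \<and> snd p > 0})"

definition Erow :: "real \<times> real \<Rightarrow> (real \<times> real) set \<Rightarrow> ennreal" where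
  "Erow p A = emeasure lborel {x. (x, snd p) \<in> A}"

definition Ecol :: "real \<times> real \<Rightarrow> (real \<times> real) set \<Rightarrow> ennreal" where
  "Ecol p A = emeasure lborel {y. (fst p, y) \<in> A}"

text \<open>Membership of an extended pair in Z (infinite coordinates are never in a bounded Z).\<close>
definition in_zset :: "(real \<times> real) set \<Rightarrow> ennreal \<Rightarrow> ennreal \<Rightarrow> bool" where
  "in_zset Z x y \<longleftrightarrow> x \<noteq> \<infinity> \<and> y \<noteq> \<infinity> \<and> (enn2real x, enn2real y) \<in> Z"

definition admissible_fn :: "(real \<Rightarrow> real) \<Rightarrow> bool" where
  "admissible_fn f \<longleftrightarrow>
     (\<forall>x\<ge>0. f x \<ge> 0) \<and>
     (\<forall>x y. 0 \<le> x \<longrightarrow> x \<le> y \<longrightarrow> f y \<le> f x) \<and>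
     (\<forall>x>0. (f \<longlongrightarrow> f x) (at_left x)) \<and>
     (\<exists>M. \<forall>x\<ge>M. f x = 0)"

definition ET :: "(real \<times> real) set \<Rightarrow> (real \<Rightarrow> real) \<Rightarrow> (real \<Rightarrow> real)
                  \<Rightarrow> (real \<times> real) set \<Rightarrow> (real \<times> real) set" where
  "ET Z f g A = A \<union> {(u, v). u \<ge> 0 \<and> v \<ge> 0 \<and>
       \<not> in_zset Z (Erow (u, v) A + ennreal (f v)) (Ecol (u, v) A + ennreal (g u))}"

definition E_spans :: "(real \<times> real) set \<Rightarrow> (real \<Rightarrow> real) \<Rightarrow> (real \<Rightarrow> real)
                       \<Rightarrow> (real \<times> real) set \<Rightarrow> bool" where
  "E_spans Z f g A \<longleftrightarrow> (\<Union>n. (ET Z f g ^^ n) A) = quadrant"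

definition EI :: "real \<Rightarrow> real \<Rightarrow> (real \<times> real) set \<Rightarrow> real" where
  "EI \<alpha> \<beta> Z = Inf {measure lborel A + (1 - \<alpha>) * integral {0..} f + (1 - \<beta>) * integral {0..} g
      | A f g. compact A \<and> A \<subseteq> quadrant \<and> admissible_fn f \<and> admissible_fn g \<and> E_spans Z f g A}"

end

theory Submission
  imports Defs
begin

text \<open>For a spanning triple \<open>(A, f, g)\<close> let \<open>p(v) = f(v) + |A \<inter> row v|\<close> and
  \<open>q(u) = g(u) + |A \<inter> column u|\<close>, with distribution functions \<open>\<phi>(t) = |{p > t}|\<close> and
  \<open>\<psi>(t) = |{q > t}|\<close>. If \<open>(x\<^sub>0, y\<^sub>0)\<close> lies in the zero set, then \<open>\<psi>(\<sigma>) + \<tau> \<le> x\<^sub>0\<close> and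
  \<open>\<phi>(\<tau>) + \<sigma> \<le> y\<^sub>0\<close> cannot both hold: otherwise \<open>A\<close> together with the columns of load \<open>> \<sigma>\<close> and
  the rows of load \<open>> \<tau>\<close> would be a bounded set closed under the spanning operator. Integrating
  this dichotomy over the rectangle \<open>(0,1] \<times> (0,a]\<close> for the two corners \<open>(a,1)\<close> and \<open>(1,a)\<close>
  gives \<open>2a \<le> \<integral>\<phi> + \<integral>\<psi> + 2 \<le> \<integral>f + \<integral>g + 2|A| + 2\<close>, from which the bound on the cost follows.

  Upper bound. \<open>A = \<emptyset>\<close> and \<open>f = g\<close> a step of height \<open>a - 1 + d\<close> on \<open>[0, 1 + d]\<close> span in three
  steps: first the square \<open>[0, 1 + d]\<^sup>2\<close>, then the two strips over it, then the whole quadrant.\<close>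

lemma admissible_fn_nonneg: "admissible_fn f \<Longrightarrow> 0 \<le> x \<Longrightarrow> 0 \<le> f x"
  unfolding admissible_fn_def by blast

lemma admissible_fn_antimono: "admissible_fn f \<Longrightarrow> 0 \<le> x \<Longrightarrow> x \<le> y \<Longrightarrow> f y \<le> f x"
  unfolding admissible_fn_def by blast

lemma admissible_fn_vanishes:
  assumes "admissible_fn f"
  obtains M where "\<And>x. M \<le> x \<Longrightarrow> f x = 0"
  using assms unfolding admissible_fn_def by blast

lemma admissible_fn_measurable:
  assumes "admissible_fn f"
  shows "(\<lambda>v. ennreal (f v) * indicator {0..} v) \<in> borel_measurable borel"
proof -
  have "mono (\<lambda>v. - f (max v 0))"
    using admissible_fn_antimono[OF assms] by (auto simp: mono_def max_def)
  then have [measurable]: "(\<lambda>v. - f (max v 0)) \<in> borel_measurable borel"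
    by (rule borel_measurable_mono)
  have "(\<lambda>v. ennreal (- (- f (max v 0))) * indicator {0..} v) \<in> borel_measurable borel"
    by measurable
  also have "(\<lambda>v. ennreal (- (- f (max v 0))) * indicator {0..} v) = (\<lambda>v. ennreal (f v) * indicator {0..} v)"
    by (auto simp: fun_eq_iff indicator_def max_def)
  finally show ?thesis .
qed

lemma admissible_fn_has_integral:
  assumes "admissible_fn f"
  shows "(f has_integral integral {0..} f) {0..}"
proof -
  obtain M where M: "\<And>x. M \<le> x \<Longrightarrow> f x = 0"
    using admissible_fn_vanishes[OF assms] by blast
  have "mono_on {0..M} (\<lambda>x. - f x)"
    using admissible_fn_antimono[OF assms] by (auto simp: mono_on_def)
  then have "(\<lambda>x. - (- f x)) integrable_on {0..M}"
    by (intro integrable_neg integrable_on_mono_on)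
  then have "(\<lambda>x. if x \<in> {0..M} then f x else 0) integrable_on {0..M}"
    by (rule integrable_eq) simp
  then have "(\<lambda>x. if x \<in> {0..M} then f x else 0) integrable_on {0..}"
    by (rule integrable_on_superset) auto
  then have "f integrable_on {0..}"
    by (rule integrable_eq) (use M in auto)
  then show ?thesis by (rule integrable_integral)
qed

lemma admissible_fn_integral_nonneg: "admissible_fn f \<Longrightarrow> 0 \<le> integral {0..} f"
  by (rule has_integral_nonneg[OF admissible_fn_has_integral]) (auto dest: admissible_fn_nonneg)

lemma admissible_fn_nn_integral:
  assumes "admissible_fn f"
  shows "(\<integral>\<^sup>+ v\<in>{0..}. ennreal (f v) \<partial>lborel) = ennreal (integral {0..} f)"
  using admissible_fn_has_integral[OF assms] admissible_fn_nonneg[OF assms]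
  by (intro nn_integral_has_integral_lebesgue') auto

definition row_section :: "(real \<times> real) set \<Rightarrow> real \<Rightarrow> real set" where
  "row_section A v = {x. (x, v) \<in> A}"

definition col_section :: "(real \<times> real) set \<Rightarrow> real \<Rightarrow> real set" where
  "col_section A u = {y. (u, y) \<in> A}"

lemma Erow_eq: "Erow (u, v) A = emeasure lborel (row_section A v)"
  by (simp add: Erow_def row_section_def)

lemma Ecol_eq: "Ecol (u, v) A = emeasure lborel (col_section A u)"
  by (simp add: Ecol_def col_section_def)

lemma sets_lborel_pairI: "A \<in> sets lborel \<Longrightarrow> A \<in> sets (lborel \<Otimes>\<^sub>M lborel)"
  by (simp only: lborel_prod)

lemma
  assumes "A \<in> sets lborel"
  shows row_section_sets: "row_section A v \<in> sets lborel"
    and col_section_sets: "col_section A u \<in> sets lborel"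
  using sets_Pair2[OF sets_lborel_pairI[OF assms]] sets_Pair1[OF sets_lborel_pairI[OF assms]]
  by (auto simp: row_section_def col_section_def vimage_def)

lemma
  assumes "A \<in> sets lborel"
  shows emeasure_row_section_measurable:
      "(\<lambda>v. emeasure lborel (row_section A v)) \<in> borel_measurable lborel"
    and emeasure_col_section_measurable:
      "(\<lambda>u. emeasure lborel (col_section A u)) \<in> borel_measurable lborel"
  using lborel_pair.measurable_emeasure_Pair2[OF sets_lborel_pairI[OF assms]]
    lborel_pair.measurable_emeasure_Pair1[OF sets_lborel_pairI[OF assms]]
  by (simp_all add: row_section_def col_section_def vimage_def)

lemma
  assumes "A \<in> sets lborel"
  shows nn_integral_emeasure_row_section:
      "(\<integral>\<^sup>+ v. emeasure lborel (row_section A v) \<partial>lborel) = emeasure lborel A"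
    and nn_integral_emeasure_col_section:
      "(\<integral>\<^sup>+ u. emeasure lborel (col_section A u) \<partial>lborel) = emeasure lborel A"
  using lborel_pair.emeasure_pair_measure_alt2[OF sets_lborel_pairI[OF assms]]
    lborel.emeasure_pair_measure_alt[OF sets_lborel_pairI[OF assms]]
  by (simp_all add: row_section_def col_section_def vimage_def lborel_prod)

lemma bounded_sections_empty:
  fixes A :: "(real \<times> real) set"
  assumes "bounded A"
  obtains B where "0 \<le> B" "\<And>v. B < v \<Longrightarrow> row_section A v = {}" "\<And>u. B < u \<Longrightarrow> col_section A u = {}"
proof -
  obtain B where B: "\<And>p. p \<in> A \<Longrightarrow> norm p \<le> B" using assms bounded_iff by blast
  have "fst p \<le> B \<and> snd p \<le> B" if "p \<in> A" for p
    using B[OF that] norm_fst_le[of "fst p" "snd p"] norm_snd_le[of "snd p" "fst p"] by auto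
  then show ?thesis
    by (intro that[of "max B 0"]) (force simp: row_section_def col_section_def)+
qed

text \<open>For \<open>v \<ge> 0\<close> and \<open>S = row_section A\<close> this is the row load \<open>row(x, A) + f(v)\<close> that the
  spanning operator compares with the zero set.\<close>

definition load :: "(real \<Rightarrow> real) \<Rightarrow> (real \<Rightarrow> real set) \<Rightarrow> real \<Rightarrow> ennreal" where
  "load f S v = ennreal (f v) * indicator {0..} v + emeasure lborel (S v)"

lemma load_measurable:
  assumes "admissible_fn f" "(\<lambda>v. emeasure lborel (S v)) \<in> borel_measurable lborel"
  shows "load f S \<in> borel_measurable lborel"
  using admissible_fn_measurable[OF assms(1)] assms(2) unfolding load_def by measurable

lemma nn_integral_load:
  assumes "admissible_fn f" "(\<lambda>v. emeasure lborel (S v)) \<in> borel_measurable lborel"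
  shows "(\<integral>\<^sup>+ v. load f S v \<partial>lborel)
    = ennreal (integral {0..} f) + (\<integral>\<^sup>+ v. emeasure lborel (S v) \<partial>lborel)"
  using admissible_fn_measurable[OF assms(1)] assms(2)
  unfolding load_def admissible_fn_nn_integral[OF assms(1), symmetric]
  by (subst nn_integral_add) auto

lemma load_superlevel_bounded:
  assumes "admissible_fn f" "\<And>v. B < v \<Longrightarrow> S v = {}" "0 \<le> t"
  obtains R where "{v. ennreal t < load f S v} \<subseteq> {..R}"
proof -
  obtain M where M: "\<And>x. M \<le> x \<Longrightarrow> f x = 0" using admissible_fn_vanishes[OF assms(1)] by blast
  have "load f S v = 0" if "max M B < v" for v
    using that M assms(2) by (simp add: load_def)
  then have "{v. ennreal t < load f S v} \<subseteq> {..max M B}"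
    by (force simp: not_le[symmetric])
  then show ?thesis by (rule that)
qed

section \<open>A layer-cake inequality\<close>

definition superlevel_measure :: "(real \<Rightarrow> ennreal) \<Rightarrow> real \<Rightarrow> ennreal" where
  "superlevel_measure h t = emeasure lborel {v. ennreal t < h v}"

lemma superlevel_measure_measurable:
  assumes [measurable]: "h \<in> borel_measurable lborel"
  shows "superlevel_measure h \<in> borel_measurable lborel"
proof -
  define E where "E = {x \<in> space (lborel \<Otimes>\<^sub>M lborel). ennreal (snd x) < h (fst x)}"
  have "E \<in> sets (lborel \<Otimes>\<^sub>M lborel)" unfolding E_def by measurable
  then have "(\<lambda>t. emeasure lborel ((\<lambda>v. (v, t)) -` E)) \<in> borel_measurable lborel"
    by (rule lborel_pair.measurable_emeasure_Pair2)
  moreover have "(\<lambda>v. (v, t)) -` E = {v. ennreal t < h v}" for t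
    unfolding E_def by (auto simp: space_pair_measure)
  ultimately show ?thesis by (simp add: superlevel_measure_def[abs_def])
qed

lemma emeasure_ennreal_less_le:
  "emeasure lborel {t::real. 0 < t \<and> ennreal t < c} \<le> c"
proof (cases c rule: ennreal_cases)
  case (real r)
  then have "emeasure lborel {t::real. 0 < t \<and> ennreal t < c} \<le> emeasure lborel {0<..r}"
    by (intro emeasure_mono) (auto simp: ennreal_less_iff)
  then show ?thesis using real by simp
qed simp

lemma nn_integral_superlevel_measure_le:
  assumes [measurable]: "h \<in> borel_measurable lborel"
  shows "(\<integral>\<^sup>+ t\<in>{0<..}. superlevel_measure h t \<partial>lborel) \<le> (\<integral>\<^sup>+ v. h v \<partial>lborel)"
proof -
  define E where "E = {x \<in> space (lborel \<Otimes>\<^sub>M lborel). 0 < snd x \<and> ennreal (snd x) < h (fst x)}"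
  have E[measurable]: "E \<in> sets (lborel \<Otimes>\<^sub>M lborel)" unfolding E_def by measurable
  have "(\<integral>\<^sup>+ t\<in>{0<..}. superlevel_measure h t \<partial>lborel)
      = (\<integral>\<^sup>+ t. emeasure lborel ((\<lambda>v. (v, t)) -` E) \<partial>lborel)"
    by (intro nn_integral_cong) (auto simp: E_def superlevel_measure_def space_pair_measure indicator_def)
  also have "\<dots> = (\<integral>\<^sup>+ v. emeasure lborel (Pair v -` E) \<partial>lborel)"
    using lborel_pair.emeasure_pair_measure_alt2[OF E] lborel.emeasure_pair_measure_alt[OF E] by simp
  also have "\<dots> \<le> (\<integral>\<^sup>+ v. h v \<partial>lborel)"
    using emeasure_ennreal_less_le
    by (intro nn_integral_mono) (simp add: E_def space_pair_measure vimage_def)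
  finally show ?thesis .
qed

lemma emeasure_gap_less_le:
  "emeasure lborel {s::real. s \<le> a \<and> ennreal (a - s) < c} \<le> c"
proof (cases c rule: ennreal_cases)
  case (real r)
  then have "emeasure lborel {s. s \<le> a \<and> ennreal (a - s) < c} \<le> emeasure lborel {a - r<..a}"
    by (intro emeasure_mono) (auto simp: ennreal_less_iff)
  then show ?thesis using real by simp
qed simp

lemma emeasure_above_graph_le:
  fixes \<psi> :: "real \<Rightarrow> ennreal" and a :: real
  assumes [measurable]: "\<psi> \<in> borel_measurable lborel" "I \<in> sets lborel"
  shows "emeasure (lborel \<Otimes>\<^sub>M lborel)
      {x \<in> space (lborel \<Otimes>\<^sub>M lborel). fst x \<in> I \<and> snd x \<le> a \<and> ennreal (a - snd x) < \<psi> (fst x)}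
    \<le> (\<integral>\<^sup>+ t\<in>I. \<psi> t \<partial>lborel)" (is "emeasure _ ?R \<le> _")
proof -
  have "emeasure (lborel \<Otimes>\<^sub>M lborel) ?R = (\<integral>\<^sup>+ t. emeasure lborel (Pair t -` ?R) \<partial>lborel)"
    by (rule lborel.emeasure_pair_measure_alt) measurable
  also have "\<dots> \<le> (\<integral>\<^sup>+ t\<in>I. \<psi> t \<partial>lborel)"
  proof (rule nn_integral_mono)
    fix t :: real
    have "emeasure lborel (Pair t -` ?R)
        \<le> emeasure lborel {s. s \<le> a \<and> ennreal (a - s) < \<psi> t} * indicator I t"
      by (cases "t \<in> I") (auto simp: space_pair_measure intro!: emeasure_mono)
    also have "\<dots> \<le> \<psi> t * indicator I t"
      by (intro mult_right_mono emeasure_gap_less_le) simp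
    finally show "emeasure lborel (Pair t -` ?R) \<le> \<psi> t * indicator I t" .
  qed
  finally show ?thesis .
qed

lemma emeasure_right_of_graph_le:
  fixes \<phi> :: "real \<Rightarrow> ennreal" and b :: real
  assumes [measurable]: "\<phi> \<in> borel_measurable lborel" "J \<in> sets lborel"
  shows "emeasure (lborel \<Otimes>\<^sub>M lborel)
      {x \<in> space (lborel \<Otimes>\<^sub>M lborel). snd x \<in> J \<and> fst x \<le> b \<and> ennreal (b - fst x) < \<phi> (snd x)}
    \<le> (\<integral>\<^sup>+ s\<in>J. \<phi> s \<partial>lborel)" (is "emeasure _ ?R \<le> _")
proof -
  have "emeasure (lborel \<Otimes>\<^sub>M lborel) ?R = (\<integral>\<^sup>+ s. emeasure lborel ((\<lambda>t. (t, s)) -` ?R) \<partial>lborel)"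
    by (rule lborel_pair.emeasure_pair_measure_alt2) measurable
  also have "\<dots> \<le> (\<integral>\<^sup>+ s\<in>J. \<phi> s \<partial>lborel)"
  proof (rule nn_integral_mono)
    fix s :: real
    have "emeasure lborel ((\<lambda>t. (t, s)) -` ?R)
        \<le> emeasure lborel {t. t \<le> b \<and> ennreal (b - t) < \<phi> s} * indicator J s"
      by (cases "s \<in> J") (auto simp: space_pair_measure intro!: emeasure_mono)
    also have "\<dots> \<le> \<phi> s * indicator J s"
      by (intro mult_right_mono emeasure_gap_less_le) simp
    finally show "emeasure lborel ((\<lambda>t. (t, s)) -` ?R) \<le> \<phi> s * indicator J s" .
  qed
  finally show ?thesis .
qed

text \<open>Each point of \<open>(0,1] \<times> (0,a]\<close> lies above the graph of \<open>a - \<psi>\<close>, or to the right of the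
  graph of \<open>1 - \<phi>\<close>; in the latter case it lies in the unit square unless \<open>s > 1\<close>.\<close>

lemma rectangle_cover_bound:
  fixes \<phi> \<psi> :: "real \<Rightarrow> ennreal"
  assumes [measurable]: "\<phi> \<in> borel_measurable lborel" "\<psi> \<in> borel_measurable lborel"
    and "1 \<le> a"
    and cover: "\<And>t s. 0 < t \<Longrightarrow> t \<le> 1 \<Longrightarrow> 0 < s \<Longrightarrow> s \<le> a \<Longrightarrow>
      ennreal (a - s) < \<psi> t \<or> ennreal (1 - t) < \<phi> s"
  shows "ennreal a \<le> (\<integral>\<^sup>+ t\<in>{0<..1}. \<psi> t \<partial>lborel) + 1 + (\<integral>\<^sup>+ s\<in>{1<..a}. \<phi> s \<partial>lborel)"
proof -
  let ?M = "lborel \<Otimes>\<^sub>M lborel :: (real \<times> real) measure"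
  define R\<^sub>1 where "R\<^sub>1 = {x \<in> space ?M. fst x \<in> {0<..1} \<and> snd x \<le> a \<and> ennreal (a - snd x) < \<psi> (fst x)}"
  define R\<^sub>2 where "R\<^sub>2 = {x \<in> space ?M. snd x \<in> {1<..a} \<and> fst x \<le> 1 \<and> ennreal (1 - fst x) < \<phi> (snd x)}"
  have [measurable]: "R\<^sub>1 \<in> sets ?M" "R\<^sub>2 \<in> sets ?M"
    unfolding R\<^sub>1_def R\<^sub>2_def by measurable
  have "ennreal a = emeasure ?M ({0<..1} \<times> {0<..a})"
    using \<open>1 \<le> a\<close> by (subst lborel.emeasure_pair_measure_Times) auto
  also have "\<dots> \<le> emeasure ?M (R\<^sub>1 \<union> R\<^sub>2 \<union> {0<..1} \<times> {0<..1})"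
  proof (rule emeasure_mono)
    show "{0<..1} \<times> {0<..a} \<subseteq> R\<^sub>1 \<union> R\<^sub>2 \<union> {0<..1} \<times> {0<..1}"
    proof (rule subsetI)
      fix p :: "real \<times> real" assume "p \<in> {0<..1} \<times> {0<..a}"
      then obtain t s where "p = (t, s)" "0 < t" "t \<le> 1" "0 < s" "s \<le> a" by auto
      then show "p \<in> R\<^sub>1 \<union> R\<^sub>2 \<union> {0<..1} \<times> {0<..1}"
        using cover[of t s] by (auto simp: R\<^sub>1_def R\<^sub>2_def space_pair_measure)
    qed
  qed measurable
  also have "\<dots> \<le> emeasure ?M R\<^sub>1 + emeasure ?M R\<^sub>2 + emeasure ?M ({0<..1} \<times> {0<..1})"
    by (intro order_trans[OF emeasure_subadditive] add_right_mono emeasure_subadditive) measurable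
  also have "\<dots> \<le> (\<integral>\<^sup>+ t\<in>{0<..1}. \<psi> t \<partial>lborel) + (\<integral>\<^sup>+ s\<in>{1<..a}. \<phi> s \<partial>lborel) + 1"
    unfolding R\<^sub>1_def R\<^sub>2_def
    by (intro add_mono emeasure_above_graph_le emeasure_right_of_graph_le)
      (auto simp: lborel.emeasure_pair_measure_Times)
  finally show ?thesis by (simp add: add_ac)
qed

section \<open>Sets closed under the spanning operator\<close>

lemma funpow_ET_subset:
  assumes "A \<subseteq> W" "\<And>S. S \<subseteq> W \<Longrightarrow> ET Z f g S \<subseteq> W"
  shows "(ET Z f g ^^ n) A \<subseteq> W"
  by (induction n) (use assms in auto)

lemma E_spans_quadrant_subset:
  assumes "E_spans Z f g A" "A \<subseteq> W" "\<And>S. S \<subseteq> W \<Longrightarrow> ET Z f g S \<subseteq> W"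
  shows "quadrant \<subseteq> W"
  using funpow_ET_subset[OF assms(2,3)] assms(1) unfolding E_spans_def by blast

lemma ET_subset_quadrant: "S \<subseteq> quadrant \<Longrightarrow> ET Z f g S \<subseteq> quadrant"
  by (auto simp: ET_def quadrant_def)

lemma E_spans_if_funpow_covers:
  assumes "A \<subseteq> quadrant" "quadrant \<subseteq> (ET Z f g ^^ n) A"
  shows "E_spans Z f g A"
proof -
  have "(ET Z f g ^^ m) A \<subseteq> quadrant" for m
    using assms(1) ET_subset_quadrant by (rule funpow_ET_subset)
  then have "(\<Union>m. (ET Z f g ^^ m) A) \<subseteq> quadrant" by blast
  moreover have "quadrant \<subseteq> (\<Union>m. (ET Z f g ^^ m) A)" using assms(2) by blast
  ultimately show ?thesis unfolding E_spans_def by (rule antisym)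
qed

lemma in_zset_ennreal_iff: "0 \<le> x \<Longrightarrow> 0 \<le> y \<Longrightarrow> in_zset Z (ennreal x) (ennreal y) \<longleftrightarrow> (x, y) \<in> Z"
  by (simp add: in_zset_def)

lemma in_zset_mono:
  assumes "\<forall>a b. (a, b) \<in> Z \<longrightarrow> ERect a b \<subseteq> Z" "in_zset Z x y" "x' \<le> x" "y' \<le> y"
  shows "in_zset Z x' y'"
proof -
  have fin: "x \<noteq> \<infinity>" "y \<noteq> \<infinity>" and Z: "(enn2real x, enn2real y) \<in> Z"
    using assms(2) by (auto simp: in_zset_def)
  then have "x' \<noteq> \<infinity>" "y' \<noteq> \<infinity>"
    using assms(3,4) by (auto simp: top_unique)
  moreover have "(enn2real x', enn2real y') \<in> ERect (enn2real x) (enn2real y)"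
    using fin assms(3,4) by (auto simp: ERect_def less_top intro!: enn2real_mono)
  ultimately show ?thesis
    using assms(1) Z by (auto simp: in_zset_def)
qed

definition strip_extension :: "(real \<times> real) set \<Rightarrow> real set \<Rightarrow> real set \<Rightarrow> (real \<times> real) set" where
  "strip_extension A X Y = {(u, v). 0 \<le> u \<and> 0 \<le> v \<and> ((u, v) \<in> A \<or> u \<in> X \<or> v \<in> Y)}"

text \<open>A line through a point outside the strips meets the extension only in \<open>A\<close> and in the
  crossing strips, so its measure grows by at most \<open>|X|\<close> (resp.\ \<open>|Y|\<close>) compared to \<open>A\<close>.\<close>

lemma ET_strip_extension_subset:
  assumes Z: "\<forall>a b. (a, b) \<in> Z \<longrightarrow> ERect a b \<subseteq> Z"
    and sets: "A \<in> sets lborel" "X \<in> sets lborel" "Y \<in> sets lborel"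
    and S: "S \<subseteq> strip_extension A X Y"
    and in_Z: "\<And>u v. 0 \<le> u \<Longrightarrow> 0 \<le> v \<Longrightarrow> u \<notin> X \<Longrightarrow> v \<notin> Y \<Longrightarrow>
      in_zset Z (emeasure lborel X + emeasure lborel (row_section A v) + ennreal (f v))
                (emeasure lborel Y + emeasure lborel (col_section A u) + ennreal (g u))"
  shows "ET Z f g S \<subseteq> strip_extension A X Y"
proof
  fix p assume p: "p \<in> ET Z f g S"
  obtain u v where [simp]: "p = (u, v)" by (cases p)
  show "p \<in> strip_extension A X Y"
  proof (rule ccontr)
    assume out: "p \<notin> strip_extension A X Y"
    with p S have uv: "0 \<le> u" "0 \<le> v" and not_Z:
      "\<not> in_zset Z (Erow (u, v) S + ennreal (f v)) (Ecol (u, v) S + ennreal (g u))"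
      by (auto simp: ET_def)
    from out uv have "u \<notin> X" "v \<notin> Y" by (auto simp: strip_extension_def)
    have "Erow (u, v) S \<le> emeasure lborel (X \<union> row_section A v)"
      unfolding Erow_eq using S \<open>v \<notin> Y\<close> sets row_section_sets
      by (intro emeasure_mono) (auto simp: strip_extension_def row_section_def)
    also have "\<dots> \<le> emeasure lborel X + emeasure lborel (row_section A v)"
      using sets row_section_sets by (intro emeasure_subadditive) auto
    finally have row: "Erow (u, v) S + ennreal (f v)
        \<le> emeasure lborel X + emeasure lborel (row_section A v) + ennreal (f v)"
      by (rule add_right_mono)
    have "Ecol (u, v) S \<le> emeasure lborel (Y \<union> col_section A u)"
      unfolding Ecol_eq using S \<open>u \<notin> X\<close> sets col_section_sets
      by (intro emeasure_mono) (auto simp: strip_extension_def col_section_def)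
    also have "\<dots> \<le> emeasure lborel Y + emeasure lborel (col_section A u)"
      using sets col_section_sets by (intro emeasure_subadditive) auto
    finally have col: "Ecol (u, v) S + ennreal (g u)
        \<le> emeasure lborel Y + emeasure lborel (col_section A u) + ennreal (g u)"
      by (rule add_right_mono)
    from in_zset_mono[OF Z in_Z[OF uv \<open>u \<notin> X\<close> \<open>v \<notin> Y\<close>] row col] not_Z show False
      by contradiction
  qed
qed

lemma not_E_spans_strip_extension:
  assumes Z: "\<forall>a b. (a, b) \<in> Z \<longrightarrow> ERect a b \<subseteq> Z"
    and A: "compact A" "A \<subseteq> quadrant"
    and X: "X \<in> sets lborel" "X \<subseteq> {..R}" and Y: "Y \<in> sets lborel" "Y \<subseteq> {..R}"
    and in_Z: "\<And>u v. 0 \<le> u \<Longrightarrow> 0 \<le> v \<Longrightarrow> u \<notin> X \<Longrightarrow> v \<notin> Y \<Longrightarrow>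
      in_zset Z (emeasure lborel X + emeasure lborel (row_section A v) + ennreal (f v))
                (emeasure lborel Y + emeasure lborel (col_section A u) + ennreal (g u))"
  shows "\<not> E_spans Z f g A"
proof
  assume spans: "E_spans Z f g A"
  have "A \<in> sets lborel"
    using A(1) by (simp add: compact_imp_closed)
  then have "ET Z f g S \<subseteq> strip_extension A X Y" if "S \<subseteq> strip_extension A X Y" for S
    by (rule ET_strip_extension_subset[OF Z _ X(1) Y(1) that in_Z])
  moreover have "A \<subseteq> strip_extension A X Y"
    using A(2) by (auto simp: strip_extension_def quadrant_def)
  ultimately have quadrant: "quadrant \<subseteq> strip_extension A X Y"
    using spans by (intro E_spans_quadrant_subset)
  obtain B where B: "0 \<le> B" "\<And>v. B < v \<Longrightarrow> row_section A v = {}"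
    using bounded_sections_empty[OF compact_imp_bounded[OF A(1)]] by metis
  define w where "w = max B R + 1"
  have "(w, w) \<in> quadrant" using B(1) by (simp add: w_def quadrant_def)
  moreover have "(w, w) \<notin> A" using B(2)[of w] by (simp add: w_def row_section_def)
  moreover have "w \<notin> X" "w \<notin> Y" using X(2) Y(2) by (auto simp: w_def)
  ultimately show False using quadrant by (auto simp: strip_extension_def)
qed

section \<open>The lower bound\<close>

lemma load_eq: "0 \<le> v \<Longrightarrow> load f S v = ennreal (f v) + emeasure lborel (S v)"
  by (simp add: load_def)

lemma ERect_subset: "(x, y) \<in> ERect a b \<Longrightarrow> ERect x y \<subseteq> ERect a b"
  by (auto simp: ERect_def)

text \<open>Outside the strips every row carries at most \<open>(x\<^sub>0 - \<tau>) + \<tau>\<close> and every column at most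
  \<open>(y\<^sub>0 - \<sigma>) + \<sigma>\<close>, so \<open>not_E_spans_strip_extension\<close> applies.\<close>

lemma E_spans_superlevel_tradeoff:
  fixes A :: "(real \<times> real) set" and f g :: "real \<Rightarrow> real"
  defines "p \<equiv> load f (row_section A)" and "q \<equiv> load g (col_section A)"
  assumes Z: "\<forall>a b. (a, b) \<in> Z \<longrightarrow> ERect a b \<subseteq> Z" and corner: "(x\<^sub>0, y\<^sub>0) \<in> Z"
    and A: "compact A" "A \<subseteq> quadrant" and f: "admissible_fn f" and g: "admissible_fn g"
    and spans: "E_spans Z f g A"
    and \<sigma>: "0 \<le> \<sigma>" "\<sigma> \<le> y\<^sub>0" and \<tau>: "0 \<le> \<tau>" "\<tau> \<le> x\<^sub>0"
  shows "ennreal (x\<^sub>0 - \<tau>) < superlevel_measure q \<sigma> \<or> ennreal (y\<^sub>0 - \<sigma>) < superlevel_measure p \<tau>"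
proof (rule ccontr)
  assume "\<not> ?thesis"
  then have \<psi>: "superlevel_measure q \<sigma> \<le> ennreal (x\<^sub>0 - \<tau>)"
    and \<phi>: "superlevel_measure p \<tau> \<le> ennreal (y\<^sub>0 - \<sigma>)" by auto
  define X where "X = {u. ennreal \<sigma> < q u}"
  define Y where "Y = {v. ennreal \<tau> < p v}"
  have sA: "A \<in> sets lborel" using A(1) by (simp add: compact_imp_closed)
  have [measurable]: "p \<in> borel_measurable lborel" "q \<in> borel_measurable lborel"
    unfolding p_def q_def
    by (rule load_measurable[OF f emeasure_row_section_measurable[OF sA]]
        load_measurable[OF g emeasure_col_section_measurable[OF sA]])+
  have "{u \<in> space lborel. ennreal \<sigma> < q u} \<in> sets lborel" "{v \<in> space lborel. ennreal \<tau> < p v} \<in> sets lborel"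
    by measurable
  then have sets: "X \<in> sets lborel" "Y \<in> sets lborel" by (simp_all add: X_def Y_def)
  obtain B where "\<And>v. B < v \<Longrightarrow> row_section A v = {}" "\<And>u. B < u \<Longrightarrow> col_section A u = {}"
    using bounded_sections_empty[OF compact_imp_bounded[OF A(1)]] by metis
  then obtain R\<^sub>X R\<^sub>Y where "X \<subseteq> {..R\<^sub>X}" "Y \<subseteq> {..R\<^sub>Y}"
    using load_superlevel_bounded[OF g _ \<sigma>(1), of B "col_section A"]
      load_superlevel_bounded[OF f _ \<tau>(1), of B "row_section A"]
    unfolding X_def Y_def p_def q_def by metis
  then have bounded: "X \<subseteq> {..max R\<^sub>X R\<^sub>Y}" "Y \<subseteq> {..max R\<^sub>X R\<^sub>Y}" by auto
  have "in_zset Z (ennreal x\<^sub>0) (ennreal y\<^sub>0)"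
    using corner \<sigma> \<tau> by (simp add: in_zset_ennreal_iff)
  moreover have "emeasure lborel X + emeasure lborel (row_section A v) + ennreal (f v) \<le> ennreal x\<^sub>0"
    if "0 \<le> v" "v \<notin> Y" for v
  proof -
    have "emeasure lborel X + emeasure lborel (row_section A v) + ennreal (f v)
        = superlevel_measure q \<sigma> + p v"
      using that by (simp add: X_def superlevel_measure_def p_def load_eq add_ac)
    also have "\<dots> \<le> ennreal (x\<^sub>0 - \<tau>) + ennreal \<tau>"
      using \<psi> that by (intro add_mono) (auto simp: Y_def not_less)
    finally show ?thesis using \<tau> by (simp add: ennreal_plus[symmetric])
  qed
  moreover have "emeasure lborel Y + emeasure lborel (col_section A u) + ennreal (g u) \<le> ennreal y\<^sub>0"
    if "0 \<le> u" "u \<notin> X" for u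
  proof -
    have "emeasure lborel Y + emeasure lborel (col_section A u) + ennreal (g u)
        = superlevel_measure p \<tau> + q u"
      using that by (simp add: Y_def superlevel_measure_def q_def load_eq add_ac)
    also have "\<dots> \<le> ennreal (y\<^sub>0 - \<sigma>) + ennreal \<sigma>"
      using \<phi> that by (intro add_mono) (auto simp: X_def not_less)
    finally show ?thesis using \<sigma> by (simp add: ennreal_plus[symmetric])
  qed
  ultimately have "\<not> E_spans Z f g A"
    by (intro not_E_spans_strip_extension[OF Z A sets(1) bounded(1) sets(2) bounded(2)])
      (blast intro: in_zset_mono[OF Z])
  with spans show False by contradiction
qed

lemma nn_integral_split_le:
  fixes a b c :: real
  assumes [measurable]: "h \<in> borel_measurable lborel" and "a \<le> b"
  shows "(\<integral>\<^sup>+ t\<in>{a<..b}. h t \<partial>lborel) + (\<integral>\<^sup>+ t\<in>{b<..c}. h t \<partial>lborel) \<le> (\<integral>\<^sup>+ t\<in>{a<..}. h t \<partial>lborel)"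
proof -
  have "(\<integral>\<^sup>+ t\<in>{a<..b}. h t \<partial>lborel) + (\<integral>\<^sup>+ t\<in>{b<..c}. h t \<partial>lborel)
      = (\<integral>\<^sup>+ t\<in>{a<..b} \<union> {b<..c}. h t \<partial>lborel)"
    by (rule nn_integral_disjoint_pair[symmetric]) auto
  also have "\<dots> \<le> (\<integral>\<^sup>+ t\<in>{a<..}. h t \<partial>lborel)"
    using \<open>a \<le> b\<close> by (intro nn_set_integral_set_mono) auto
  finally show ?thesis .
qed

lemma nn_integral_superlevel_measure_load_le:
  assumes "admissible_fn f" "(\<lambda>v. emeasure lborel (S v)) \<in> borel_measurable lborel"
  shows "(\<integral>\<^sup>+ t\<in>{0<..}. superlevel_measure (load f S) t \<partial>lborel)
    \<le> ennreal (integral {0..} f) + (\<integral>\<^sup>+ v. emeasure lborel (S v) \<partial>lborel)"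
  unfolding nn_integral_load[OF assms, symmetric]
  by (rule nn_integral_superlevel_measure_le[OF load_measurable[OF assms]])

lemma E_spans_superlevel_integrals_bound:
  assumes "1 \<le> a" and A: "compact A" "A \<subseteq> quadrant" and f: "admissible_fn f" and g: "admissible_fn g"
    and spans: "E_spans (ERect a 1 \<union> ERect 1 a) f g A"
  shows "ennreal a + ennreal a \<le> (\<integral>\<^sup>+ t\<in>{0<..}. superlevel_measure (load f (row_section A)) t \<partial>lborel)
    + (\<integral>\<^sup>+ t\<in>{0<..}. superlevel_measure (load g (col_section A)) t \<partial>lborel) + 2"
proof -
  define \<phi> where "\<phi> = superlevel_measure (load f (row_section A))"
  define \<psi> where "\<psi> = superlevel_measure (load g (col_section A))"
  have sA: "A \<in> sets lborel" using A(1) by (simp add: compact_imp_closed)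
  have [measurable]: "\<phi> \<in> borel_measurable lborel" "\<psi> \<in> borel_measurable lborel"
    unfolding \<phi>_def \<psi>_def
    by (rule superlevel_measure_measurable[OF load_measurable[OF f emeasure_row_section_measurable[OF sA]]]
        superlevel_measure_measurable[OF load_measurable[OF g emeasure_col_section_measurable[OF sA]]])+
  have Z: "\<forall>x y. (x, y) \<in> ERect a 1 \<union> ERect 1 a \<longrightarrow> ERect x y \<subseteq> ERect a 1 \<union> ERect 1 a"
    using ERect_subset by blast
  have corners: "(a, 1) \<in> ERect a 1 \<union> ERect 1 a" "(1, a) \<in> ERect a 1 \<union> ERect 1 a"
    using \<open>1 \<le> a\<close> by (auto simp: ERect_def)
  note tradeoff = E_spans_superlevel_tradeoff[OF Z _ A f g spans, folded \<phi>_def \<psi>_def]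
  have "ennreal a \<le> (\<integral>\<^sup>+ t\<in>{0<..1}. \<psi> t \<partial>lborel) + 1 + (\<integral>\<^sup>+ s\<in>{1<..a}. \<phi> s \<partial>lborel)"
    using \<open>1 \<le> a\<close> tradeoff[OF corners(1)] by (intro rectangle_cover_bound) auto
  moreover have "ennreal a \<le> (\<integral>\<^sup>+ t\<in>{0<..1}. \<phi> t \<partial>lborel) + 1 + (\<integral>\<^sup>+ s\<in>{1<..a}. \<psi> s \<partial>lborel)"
    using \<open>1 \<le> a\<close> tradeoff[OF corners(2)] by (intro rectangle_cover_bound) (auto simp: disj_commute)
  ultimately have "ennreal a + ennreal a
      \<le> ((\<integral>\<^sup>+ t\<in>{0<..1}. \<psi> t \<partial>lborel) + 1 + (\<integral>\<^sup>+ s\<in>{1<..a}. \<phi> s \<partial>lborel))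
       + ((\<integral>\<^sup>+ t\<in>{0<..1}. \<phi> t \<partial>lborel) + 1 + (\<integral>\<^sup>+ s\<in>{1<..a}. \<psi> s \<partial>lborel))"
    by (rule add_mono)
  also have "\<dots> = ((\<integral>\<^sup>+ t\<in>{0<..1}. \<phi> t \<partial>lborel) + (\<integral>\<^sup>+ s\<in>{1<..a}. \<phi> s \<partial>lborel))
       + ((\<integral>\<^sup>+ t\<in>{0<..1}. \<psi> t \<partial>lborel) + (\<integral>\<^sup>+ s\<in>{1<..a}. \<psi> s \<partial>lborel)) + 2"
    by (simp only: one_add_one[symmetric] add_ac)
  also have "\<dots> \<le> (\<integral>\<^sup>+ t\<in>{0<..}. \<phi> t \<partial>lborel) + (\<integral>\<^sup>+ t\<in>{0<..}. \<psi> t \<partial>lborel) + 2"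
    using nn_integral_split_le[of \<phi> 0 1 a] nn_integral_split_le[of \<psi> 0 1 a] by (intro add_mono) auto
  finally show ?thesis unfolding \<phi>_def \<psi>_def .
qed

lemma E_spans_lower_bound:
  assumes "1 \<le> a" and A: "compact A" "A \<subseteq> quadrant" and f: "admissible_fn f" and g: "admissible_fn g"
    and spans: "E_spans (ERect a 1 \<union> ERect 1 a) f g A"
  shows "2 * a \<le> integral {0..} f + integral {0..} g + 2 * measure lborel A + 2"
proof -
  have sA: "A \<in> sets lborel" using A(1) by (simp add: compact_imp_closed)
  have "ennreal a + ennreal a \<le> (\<integral>\<^sup>+ t\<in>{0<..}. superlevel_measure (load f (row_section A)) t \<partial>lborel)
    + (\<integral>\<^sup>+ t\<in>{0<..}. superlevel_measure (load g (col_section A)) t \<partial>lborel) + 2"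
    by (rule E_spans_superlevel_integrals_bound[OF assms])
  also have "\<dots> \<le> ennreal (integral {0..} f + measure lborel A)
      + ennreal (integral {0..} g + measure lborel A) + 2"
    using nn_integral_superlevel_measure_load_le[OF f emeasure_row_section_measurable[OF sA]]
      nn_integral_superlevel_measure_load_le[OF g emeasure_col_section_measurable[OF sA]]
      nn_integral_emeasure_row_section[OF sA] nn_integral_emeasure_col_section[OF sA]
      emeasure_compact_finite[OF A(1)]
      admissible_fn_integral_nonneg[OF f] admissible_fn_integral_nonneg[OF g]
    by (intro add_mono) (auto simp: emeasure_eq_ennreal_measure)
  finally show ?thesis
    using \<open>1 \<le> a\<close> admissible_fn_integral_nonneg[OF f] admissible_fn_integral_nonneg[OF g]
    by (simp add: ennreal_plus[symmetric] ennreal_numeral[symmetric]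
        del: ennreal_plus ennreal_numeral)
qed

section \<open>The upper bound\<close>

definition step_fn :: "real \<Rightarrow> real \<Rightarrow> real \<Rightarrow> real" where
  "step_fn h w x = (if 0 \<le> x \<and> x \<le> w then h else 0)"

lemma admissible_step_fn:
  assumes "0 \<le> h"
  shows "admissible_fn (step_fn h w)"
  unfolding admissible_fn_def
proof (intro conjI allI impI)
  fix x :: real assume "0 < x"
  define b where "b = (if x \<le> w then 0 else max 0 w)"
  have "b < x" using \<open>0 < x\<close> by (simp add: b_def)
  then have "eventually (\<lambda>y. y \<in> {b<..<x}) (at_left x)"
    by (rule eventually_at_left_real)
  then have "eventually (\<lambda>y. step_fn h w y = step_fn h w x) (at_left x)"
    by eventually_elim (auto simp: step_fn_def b_def split: if_splits)
  then show "(step_fn h w \<longlongrightarrow> step_fn h w x) (at_left x)"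
    by (rule tendsto_eventually)
next
  show "\<exists>M. \<forall>x\<ge>M. step_fn h w x = 0"
    by (intro exI[of _ "max 0 w + 1"]) (auto simp: step_fn_def)
qed (use assms in \<open>auto simp: step_fn_def\<close>)

lemma integral_step_fn:
  assumes "0 \<le> w"
  shows "integral {0..} (step_fn h w) = h * w"
proof -
  have "((\<lambda>x. h) has_integral h * w) {0..w}"
    using has_integral_const_real[of h 0 w] assms by (simp add: mult.commute)
  then have "(step_fn h w has_integral h * w) {0..w}"
    by (rule has_integral_eq[rotated]) (simp add: step_fn_def)
  then have "(step_fn h w has_integral h * w) {0..}"
    by (rule has_integral_on_superset) (auto simp: step_fn_def)
  then show ?thesis by (rule integral_unique)
qed

lemma
  assumes "0 \<le> a"
  shows Erow_ERect: "Erow (u, v) (ERect a b) = (if 0 \<le> v \<and> v \<le> b then ennreal a else 0)"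
    and Ecol_ERect: "Ecol (u, v) (ERect b a) = (if 0 \<le> u \<and> u \<le> b then ennreal a else 0)"
proof -
  have "{x. (x, v) \<in> ERect a b} = (if 0 \<le> v \<and> v \<le> b then {0..a} else {})"
    "{y. (u, y) \<in> ERect b a} = (if 0 \<le> u \<and> u \<le> b then {0..a} else {})"
    by (auto simp: ERect_def)
  then show "Erow (u, v) (ERect a b) = (if 0 \<le> v \<and> v \<le> b then ennreal a else 0)"
    "Ecol (u, v) (ERect b a) = (if 0 \<le> u \<and> u \<le> b then ennreal a else 0)"
    using assms by (simp_all add: Erow_def Ecol_def)
qed

lemma
  assumes "0 \<le> w"
  shows Erow_strip_extension:
      "0 \<le> v \<Longrightarrow> v \<notin> Y \<Longrightarrow> Erow (u, v) (strip_extension {} {0..w} Y) = ennreal w"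
    and Ecol_strip_extension:
      "0 \<le> u \<Longrightarrow> u \<notin> X \<Longrightarrow> Ecol (u, v) (strip_extension {} X {0..w}) = ennreal w"
proof -
  assume "0 \<le> v" "v \<notin> Y"
  then have "{x. (x, v) \<in> strip_extension {} {0..w} Y} = {0..w}"
    by (auto simp: strip_extension_def)
  then show "Erow (u, v) (strip_extension {} {0..w} Y) = ennreal w"
    using assms by (simp add: Erow_def)
next
  assume "0 \<le> u" "u \<notin> X"
  then have "{y. (u, y) \<in> strip_extension {} X {0..w}} = {0..w}"
    by (auto simp: strip_extension_def)
  then show "Ecol (u, v) (strip_extension {} X {0..w}) = ennreal w"
    using assms by (simp add: Ecol_def)
qed

lemma mem_ET_ennreal_iff:
  assumes "Erow (u, v) S = ennreal r" "Ecol (u, v) S = ennreal c"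
    and "0 \<le> r" "0 \<le> c" "0 \<le> f v" "0 \<le> g u"
  shows "(u, v) \<in> ET Z f g S \<longleftrightarrow> (u, v) \<in> S \<or> (0 \<le> u \<and> 0 \<le> v \<and> (r + f v, c + g u) \<notin> Z)"
  using assms by (simp add: ET_def ennreal_plus[symmetric] in_zset_ennreal_iff del: ennreal_plus)

lemma mem_ERect_union_iff:
  "0 \<le> x \<Longrightarrow> 0 \<le> y \<Longrightarrow> (x, y) \<in> ERect a b \<union> ERect b a \<longleftrightarrow> (x \<le> a \<and> y \<le> b) \<or> (x \<le> b \<and> y \<le> a)"
  by (auto simp: ERect_def)

context
  fixes a h w :: real
  assumes h: "1 < h" "h \<le> a" and w: "1 < w" "a < h + w"
begin

lemma ET_step_fn_empty: "ET (ERect a 1 \<union> ERect 1 a) (step_fn h w) (step_fn h w) {} = ERect w w"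
proof (intro set_eqI)
  fix p :: "real \<times> real"
  obtain u v where [simp]: "p = (u, v)" by (cases p)
  have "(u, v) \<in> ET (ERect a 1 \<union> ERect 1 a) (step_fn h w) (step_fn h w) {}
      \<longleftrightarrow> 0 \<le> u \<and> 0 \<le> v \<and> (step_fn h w v, step_fn h w u) \<notin> ERect a 1 \<union> ERect 1 a"
    using h by (subst mem_ET_ennreal_iff[where r = 0 and c = 0]) (auto simp: Erow_def Ecol_def step_fn_def)
  also have "\<dots> \<longleftrightarrow> (u, v) \<in> ERect w w"
    using h w by (auto simp: mem_ERect_union_iff step_fn_def ERect_def)
  finally show "p \<in> ET (ERect a 1 \<union> ERect 1 a) (step_fn h w) (step_fn h w) {} \<longleftrightarrow> p \<in> ERect w w" by simp
qed

lemma ET_step_fn_square: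
  "ET (ERect a 1 \<union> ERect 1 a) (step_fn h w) (step_fn h w) (ERect w w) = strip_extension {} {0..w} {0..w}"
proof (intro set_eqI)
  fix p :: "real \<times> real"
  obtain u v where [simp]: "p = (u, v)" by (cases p)
  let ?r = "if 0 \<le> v \<and> v \<le> w then w else 0"
  let ?c = "if 0 \<le> u \<and> u \<le> w then w else 0"
  have "(u, v) \<in> ET (ERect a 1 \<union> ERect 1 a) (step_fn h w) (step_fn h w) (ERect w w) \<longleftrightarrow> (u, v) \<in> ERect w w \<or>
      (0 \<le> u \<and> 0 \<le> v \<and> (?r + step_fn h w v, ?c + step_fn h w u) \<notin> ERect a 1 \<union> ERect 1 a)"
    using h w by (intro mem_ET_ennreal_iff)
      (auto simp: Erow_ERect Ecol_ERect step_fn_def)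
  also have "\<dots> \<longleftrightarrow> (u, v) \<in> strip_extension {} {0..w} {0..w}"
    using h w by (auto simp: mem_ERect_union_iff step_fn_def ERect_def strip_extension_def)
  finally show "p \<in> ET (ERect a 1 \<union> ERect 1 a) (step_fn h w) (step_fn h w) (ERect w w)
      \<longleftrightarrow> p \<in> strip_extension {} {0..w} {0..w}" by simp
qed

lemma quadrant_subset_ET_step_fn_strips:
  "quadrant \<subseteq> ET (ERect a 1 \<union> ERect 1 a) (step_fn h w) (step_fn h w) (strip_extension {} {0..w} {0..w})"
proof
  fix p :: "real \<times> real" assume "p \<in> quadrant"
  obtain u v where [simp]: "p = (u, v)" by (cases p)
  show "p \<in> ET (ERect a 1 \<union> ERect 1 a) (step_fn h w) (step_fn h w) (strip_extension {} {0..w} {0..w})"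
  proof (cases "u \<le> w \<or> v \<le> w")
    case True
    with \<open>p \<in> quadrant\<close> show ?thesis by (auto simp: ET_def strip_extension_def quadrant_def)
  next
    case False
    with \<open>p \<in> quadrant\<close> w
    have "(u, v) \<in> ET (ERect a 1 \<union> ERect 1 a) (step_fn h w) (step_fn h w) (strip_extension {} {0..w} {0..w})
        \<longleftrightarrow> (u, v) \<in> strip_extension {} {0..w} {0..w} \<or> (w + 0, w + 0) \<notin> ERect a 1 \<union> ERect 1 a"
      by (subst mem_ET_ennreal_iff[where r = w and c = w])
        (auto simp: Erow_strip_extension Ecol_strip_extension step_fn_def quadrant_def)
    with w show ?thesis by (simp add: ERect_def)
  qed
qed

lemma E_spans_step_fn: "E_spans (ERect a 1 \<union> ERect 1 a) (step_fn h w) (step_fn h w) {}"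
proof (rule E_spans_if_funpow_covers)
  show "quadrant \<subseteq> (ET (ERect a 1 \<union> ERect 1 a) (step_fn h w) (step_fn h w) ^^ 3) {}"
    using quadrant_subset_ET_step_fn_strips
    by (simp add: numeral_3_eq_3 ET_step_fn_empty ET_step_fn_square)
qed simp

end

definition E_costs :: "real \<Rightarrow> real \<Rightarrow> (real \<times> real) set \<Rightarrow> real set" where
  "E_costs \<alpha> \<beta> Z = {measure lborel A + (1 - \<alpha>) * integral {0..} f + (1 - \<beta>) * integral {0..} g
      | A f g. compact A \<and> A \<subseteq> quadrant \<and> admissible_fn f \<and> admissible_fn g \<and> E_spans Z f g A}"

lemma EI_eq_Inf_E_costs: "EI \<alpha> \<beta> Z = Inf (E_costs \<alpha> \<beta> Z)"
  by (simp add: EI_def E_costs_def)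

lemma quadratic_cost_bound:
  fixes a \<epsilon> F G m :: real
  assumes "1 \<le> a" "0 \<le> \<epsilon>" "0 \<le> F" "0 \<le> G" "0 \<le> m" and budget: "2 * a \<le> F + G + 2 * m + 2"
  shows "2 * (a - 1) * (\<epsilon> - 2 * \<epsilon>\<^sup>2) \<le> m + \<epsilon> * F + \<epsilon> * G"
proof (cases "\<epsilon> \<le> 1 / 2")
  case True
  have "0 \<le> m * (1 - 2 * \<epsilon>)" "0 \<le> (a - 1) * \<epsilon>\<^sup>2"
    using assms True by simp_all
  then have "2 * (a - 1) * (\<epsilon> - 2 * \<epsilon>\<^sup>2) \<le> 2 * (a - 1) * \<epsilon> + m * (1 - 2 * \<epsilon>)"
    by (simp add: algebra_simps power2_eq_square)
  also have "\<dots> \<le> m + \<epsilon> * (F + G)"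
    using mult_left_mono[OF budget \<open>0 \<le> \<epsilon>\<close>] by (simp add: algebra_simps)
  finally show ?thesis by (simp add: algebra_simps)
next
  case False
  then have "2 * (a - 1) * (\<epsilon> - 2 * \<epsilon>\<^sup>2) \<le> 0"
    using assms by (intro mult_nonneg_nonpos) (auto simp: power2_eq_square)
  also have "0 \<le> m + \<epsilon> * F + \<epsilon> * G"
    using assms by simp
  finally show ?thesis .
qed

lemma E_costs_lower_bound:
  assumes "1 \<le> a" "\<alpha> \<le> 1" "x \<in> E_costs \<alpha> \<alpha> (ERect a 1 \<union> ERect 1 a)"
  shows "2 * (a - 1) * ((1 - \<alpha>) - 2 * (1 - \<alpha>)\<^sup>2) \<le> x"
proof -
  obtain A f g where x: "x = measure lborel A + (1 - \<alpha>) * integral {0..} f + (1 - \<alpha>) * integral {0..} g"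
    and A: "compact A" "A \<subseteq> quadrant" and f: "admissible_fn f" and g: "admissible_fn g"
    and spans: "E_spans (ERect a 1 \<union> ERect 1 a) f g A"
    using assms(3) by (auto simp: E_costs_def)
  show ?thesis
    unfolding x using assms(1,2)
    by (intro quadratic_cost_bound E_spans_lower_bound[OF assms(1) A f g spans]
        admissible_fn_integral_nonneg f g measure_nonneg) auto
qed

text \<open>For \<open>d = 0\<close> the hypothesis \<open>a < h + w\<close> of \<open>E_spans_step_fn\<close> fails, which is why the upper
  bound is only attained in the limit \<open>d \<rightarrow> 0\<close>.\<close>

lemma step_fn_cost_mem_E_costs:
  assumes "2 \<le> a" "0 < d" "d \<le> 1"
  shows "2 * (1 - \<alpha>) * ((a - 1 + d) * (1 + d)) \<in> E_costs \<alpha> \<alpha> (ERect a 1 \<union> ERect 1 a)"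
proof -
  let ?F = "step_fn (a - 1 + d) (1 + d)"
  have "E_spans (ERect a 1 \<union> ERect 1 a) ?F ?F {}"
    using assms by (intro E_spans_step_fn) auto
  then have "measure lborel {} + (1 - \<alpha>) * integral {0..} ?F + (1 - \<alpha>) * integral {0..} ?F
      \<in> E_costs \<alpha> \<alpha> (ERect a 1 \<union> ERect 1 a)"
    unfolding E_costs_def using assms
    by (intro CollectI exI[of _ "{}"] exI[of _ ?F]) (auto intro: admissible_step_fn)
  then show ?thesis
    using assms by (simp add: integral_step_fn algebra_simps)
qed

lemma EI_ERect_union_ge:
  assumes "2 \<le> a" "\<alpha> \<le> 1"
  shows "2 * (a - 1) * ((1 - \<alpha>) - 2 * (1 - \<alpha>)\<^sup>2) \<le> EI \<alpha> \<alpha> (ERect a 1 \<union> ERect 1 a)"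
  unfolding EI_eq_Inf_E_costs
proof (rule cInf_greatest)
  show "E_costs \<alpha> \<alpha> (ERect a 1 \<union> ERect 1 a) \<noteq> {}"
    using step_fn_cost_mem_E_costs[OF assms(1), of 1 \<alpha>] by auto
next
  fix x assume "x \<in> E_costs \<alpha> \<alpha> (ERect a 1 \<union> ERect 1 a)"
  then show "2 * (a - 1) * ((1 - \<alpha>) - 2 * (1 - \<alpha>)\<^sup>2) \<le> x"
    using assms by (intro E_costs_lower_bound) auto
qed

lemma EI_ERect_union_le:
  assumes "2 \<le> a" "0 \<le> \<alpha>" "\<alpha> \<le> 1"
  shows "EI \<alpha> \<alpha> (ERect a 1 \<union> ERect 1 a) \<le> 2 * (a - 1) * (1 - \<alpha>)"
  unfolding EI_eq_Inf_E_costs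
proof (rule field_le_epsilon)
  fix e :: real assume "0 < e"
  let ?C = "E_costs \<alpha> \<alpha> (ERect a 1 \<union> ERect 1 a)"
  define d where "d = min 1 (e / (2 * (a + 1)))"
  have d: "0 < d" "d \<le> 1" "d \<le> e / (2 * (a + 1))"
    using \<open>0 < e\<close> assms(1) by (auto simp: d_def)
  have "bdd_below ?C"
    using E_costs_lower_bound[of a \<alpha>] assms by (intro bdd_belowI[of _ "2 * (a - 1) * ((1 - \<alpha>) - 2 * (1 - \<alpha>)\<^sup>2)"]) simp
  then have "Inf ?C \<le> 2 * (1 - \<alpha>) * ((a - 1 + d) * (1 + d))"
    using step_fn_cost_mem_E_costs[OF assms(1) d(1,2)] by (rule cInf_lower[rotated])
  also have "\<dots> = 2 * (a - 1) * (1 - \<alpha>) + (1 - \<alpha>) * (2 * d * (a + d))"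
    by (simp add: algebra_simps)
  also have "(1 - \<alpha>) * (2 * d * (a + d)) \<le> 1 * (2 * d * (a + 1))"
    using assms d by (intro mult_mono mult_left_mono) auto
  also have "\<dots> \<le> e"
    using d(3) assms(1) by (simp add: field_simps)
  finally show "Inf ?C \<le> 2 * (a - 1) * (1 - \<alpha>) + e" by simp
qed

theorem mainTheorem17:
  fixes a \<alpha> :: real
  assumes "a \<ge> 2" and "0 \<le> \<alpha>" and "\<alpha> \<le> 1"
  shows "2 * (a - 1) * ((1 - \<alpha>) - 2 * (1 - \<alpha>)^2) \<le> EI \<alpha> \<alpha> (ERect a 1 \<union> ERect 1 a)
       \<and> EI \<alpha> \<alpha> (ERect a 1 \<union> ERect 1 a) \<le> 2 * (a - 1) * (1 - \<alpha>)"
  using EI_ERect_union_ge[of a \<alpha>] EI_ERect_union_le[of a \<alpha>] assms by simp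

end
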